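(* Let $\mathbb{K}\in\{\mathbb{R},\mathbb{C}\}$, $X:=\mathbb{K}^n$ with $\langle\mathbf{x},\mathbf{y}\rangle_X:=\langle\mathbf{R}_X\mathbf{x},\mathbf{y}\rangle$ for a self-adjoint positive definite $\mathbf{R}_X$, and dual norm $\|\mathbf{y}'\|_{X'}:=\langle\mathbf{y}',\mathbf{R}_X^{-1}\mathbf{y}'\rangle^{1/2}$. Let $Z\subseteq Y\subseteq X$ be subspaces and $Y':=\{\mathbf{R}_X\mathbf{y}:\mathbf{y}\in Y\}$. Let $\mathbf{\Theta}\in\mathbb{K}^{k\times n}$ satisfy, for some $\varepsilon\in[0,1)$, $|\langle\mathbf{x},\mathbf{y}\rangle_X-\langle\mathbf{\Theta}\mathbf{x},\mathbf{\Theta}\mathbf{y}\rangle|\le\varepsilon\|\mathbf{x}\|_X\|\mathbf{y}\|_X$ for all $\mathbf{x},\mathbf{y}\in Y$. For $\mathbf{y}'\in Y'$ define $$\|\mathbf{y}'\|_{Z'}:=\max_{\mathbf{x}\in Z\setminus\{\mathbf{0}\}}\frac{|\langle\mathbf{y}',\mathbf{x}\rangle|}{\|\mathbf{x}\|_X},\qquad\|\mathbf{y}'\|_{Z'}^{\mathbf{\Theta}}:=\max_{\mathbf{x}\in Z\setminus\{\mathbf{0}\}}\frac{|\langle\mathbf{\Theta}\mathbf{R}_X^{-1}\mathbf{y}',\mathbf{\Theta}\mathbf{x}\rangle|}{\|\mathbf{\Theta}\mathbf{x}\|}.$$ Then for all $\mathbf{y}'\in Y'$, $$\frac{1}{\s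qrt{1+\varepsilon}}\big(\|\mathbf{y}'\|_{Z'}-\varepsilon\|\mathbf{y}'\|_{X'}\big)\le\|\mathbf{y}'\|_{Z'}^{\mathbf{\Theta}}\le\frac{1}{\sqrt{1-\varepsilon}}\big(\|\mathbf{y}'\|_{Z'}+\varepsilon\|\mathbf{y}'\|_{X'}\big).$$
   Context: $\langle\mathbf{x},\mathbf{y}\rangle=\mathbf{x}^{\mathrm{H}}\mathbf{y}$ is the canonical inner product and $\|\cdot\|$ the Euclidean norm; $\|\cdot\|_X$ is the norm induced by $\langle\cdot,\cdot\rangle_X$. *)

theory Defs
  imports "HOL-Analysis.Analysis"
begin

text \<open>Everything is generic in the scalar field 'k together with its conjugation c:
  K = real uses c = id, K = complex uses c = cnj.  Vectors of K^n are 'k^'n,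
  k x n matrices are 'k^'n^'m.\<close>

definition cip :: "('k::real_normed_field \<Rightarrow> 'k) \<Rightarrow> 'k^'n \<Rightarrow> 'k^'n \<Rightarrow> 'k" where
  "cip c x y = (\<Sum>i\<in>UNIV. c (x $ i) * y $ i)"

definition enorm :: "('k::real_normed_field \<Rightarrow> 'k) \<Rightarrow> 'k^'n \<Rightarrow> real" where
  "enorm c x = sqrt (norm (cip c x x))"

definition Xnorm :: "('k::real_normed_field \<Rightarrow> 'k) \<Rightarrow> 'k^'n^'n \<Rightarrow> 'k^'n \<Rightarrow> real" where
  "Xnorm c R x = sqrt (norm (cip c (R *v x) x))"

definition Xdualnorm :: "('k::real_normed_field \<Rightarrow> 'k) \<Rightarrow> 'k^'n^'n \<Rightarrow> 'k^'n \<Rightarrow> real" where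
  "Xdualnorm c R y' = sqrt (norm (cip c y' (matrix_inv R *v y')))"

text \<open>||y'||_Z' = max over x in Z \ {0} of |<y',x>| / ||x||_X (the max is taken as a Sup;
  0 is inserted so that Z = {0} gives the value 0).\<close>
definition Zdualnorm :: "('k::real_normed_field \<Rightarrow> 'k) \<Rightarrow> 'k^'n^'n \<Rightarrow> ('k^'n) set \<Rightarrow> 'k^'n \<Rightarrow> real" where
  "Zdualnorm c R Z y' =
     Sup (insert 0 {norm (cip c y' x) / Xnorm c R x | x. x \<in> Z \<and> x \<noteq> 0})"

definition ZdualnormTheta :: "('k::real_normed_field \<Rightarrow> 'k) \<Rightarrow> 'k^'n^'n \<Rightarrow> 'k^'n^'m
     \<Rightarrow> ('k^'n) set \<Rightarrow> 'k^'n \<Rightarrow> real" where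
  "ZdualnormTheta c R \<Theta> Z y' =
     Sup (insert 0 {norm (cip c (\<Theta> *v (matrix_inv R *v y')) (\<Theta> *v x)) / enorm c (\<Theta> *v x)
                    | x. x \<in> Z \<and> x \<noteq> 0})"

definition Ksubspace :: "('k::real_normed_field ^'n) set \<Rightarrow> bool" where
  "Ksubspace S \<longleftrightarrow> 0 \<in> S \<and> (\<forall>x\<in>S. \<forall>y\<in>S. x + y \<in> S) \<and> (\<forall>a::'k. \<forall>x\<in>S. a *s x \<in> S)"

definition self_adjoint :: "('k::real_normed_field \<Rightarrow> 'k) \<Rightarrow> 'k^'n^'n \<Rightarrow> bool" where
  "self_adjoint c R \<longleftrightarrow> (\<forall>i j. R $ i $ j = c (R $ j $ i))"

definition pos_def :: "('k::real_normed_field \<Rightarrow> 'k) \<Rightarrow> 'k^'n^'n \<Rightarrow> bool" where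
  "pos_def c R \<longleftrightarrow> (\<forall>x. x \<noteq> 0 \<longrightarrow> (\<exists>r::real. r > 0 \<and> cip c (R *v x) x = of_real r))"

definition setting :: "('k::real_normed_field \<Rightarrow> 'k) \<Rightarrow> 'k^'n^'n \<Rightarrow> 'k^'n^'m
     \<Rightarrow> ('k^'n) set \<Rightarrow> ('k^'n) set \<Rightarrow> real \<Rightarrow> bool" where
  "setting c R \<Theta> Y Z \<epsilon> \<longleftrightarrow>
     self_adjoint c R \<and> pos_def c R \<and> Ksubspace Y \<and> Ksubspace Z \<and> Z \<subseteq> Y \<and>
     0 \<le> \<epsilon> \<and> \<epsilon> < 1 \<and>
     (\<forall>x\<in>Y. \<forall>y\<in>Y. norm (cip c (R *v x) y - cip c (\<Theta> *v x) (\<Theta> *v y))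
                      \<le> \<epsilon> * Xnorm c R x * Xnorm c R y)"

end

theory Submission
  imports Defs
begin

text \<open>Both estimates come from comparing, for each nonzero x in Z, the two quotients in the
  definitions of the dual norms.  Since y' = R y with y in Y, the numerators are
  the inner products of y with x in the X-geometry and in the sketched geometry; these differ by
  at most \<epsilon> ||y||_X ||x||_X = \<epsilon> ||y'||_X' ||x||_X, and the embedding hypothesis with
  both arguments equal to x gives sqrt(1 - \<epsilon>) ||x||_X \<le> ||\<Theta> x|| \<le> sqrt(1 + \<epsilon>) ||x||_X for the denominators.\<close>

lemma ratio_Sup_le:
  fixes f g :: "'a \<Rightarrow> real"
  assumes "0 \<le> B" and "\<And>x. P x \<Longrightarrow> 0 < g x" and "\<And>x. P x \<Longrightarrow> f x \<le> B * g x"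
  shows "Sup (insert 0 {f x / g x | x. P x}) \<le> B"
  using assms by (intro cSup_least) (auto simp: divide_le_eq)

lemma
  fixes f g :: "'a \<Rightarrow> real"
  assumes pos: "\<And>x. P x \<Longrightarrow> 0 < g x" and bound: "\<And>x. P x \<Longrightarrow> f x \<le> B * g x"
  shows ratio_Sup_nonneg: "0 \<le> Sup (insert 0 {f x / g x | x. P x})"
    and le_ratio_Sup: "P x \<Longrightarrow> f x \<le> Sup (insert 0 {f x / g x | x. P x}) * g x"
proof -
  have "f x / g x \<le> B" if "P x" for x
    using pos[OF that] bound[OF that] by (simp add: divide_le_eq)
  then have bdd: "bdd_above (insert 0 {f x / g x | x. P x})"
    by (intro bdd_aboveI[where M = "max 0 B"]) force
  then show "0 \<le> Sup (insert 0 {f x / g x | x. P x})"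
    by (simp add: cSup_upper)
  assume "P x"
  then have "f x / g x \<le> Sup (insert 0 {f x / g x | x. P x})"
    using bdd by (intro cSup_upper) auto
  with pos[OF \<open>P x\<close>] show "f x \<le> Sup (insert 0 {f x / g x | x. P x}) * g x"
    by (simp add: divide_le_eq)
qed

locale conjugation =
  fixes c :: "'k::real_normed_field \<Rightarrow> 'k"
  assumes conj_mult_self: "\<And>a. c a * a = of_real ((norm a)\<^sup>2)"
    and norm_conj: "\<And>a. norm (c a) = norm a"
begin

lemma conj_zero: "c 0 = 0"
  using norm_conj[of 0] by simp

lemma cip_self: "cip c v v = of_real (\<Sum>i\<in>UNIV. (norm (v $ i))\<^sup>2)"
  unfolding cip_def conj_mult_self of_real_sum ..

lemma enorm_eq_sqrt_sum: "enorm c v = sqrt (\<Sum>i\<in>UNIV. (norm (v $ i))\<^sup>2)"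
  unfolding enorm_def cip_self norm_of_real by (simp add: sum_nonneg del: of_real_power)

lemma enorm_sq: "(enorm c v)\<^sup>2 = (\<Sum>i\<in>UNIV. (norm (v $ i))\<^sup>2)"
  unfolding enorm_eq_sqrt_sum by (simp add: sum_nonneg)

lemma enorm_nonneg: "0 \<le> enorm c v"
  by (simp add: enorm_def)

lemma cip_cauchy_schwarz: "norm (cip c a b) \<le> enorm c a * enorm c b"
proof -
  have "norm (cip c a b) \<le> (\<Sum>i\<in>UNIV. norm (c (a $ i) * b $ i))"
    unfolding cip_def by (rule norm_sum)
  also have "\<dots> = (\<Sum>i\<in>UNIV. \<bar>norm (a $ i)\<bar> * \<bar>norm (b $ i)\<bar>)"
    by (simp add: norm_mult norm_conj)
  also have "\<dots> \<le> L2_set (\<lambda>i. norm (a $ i)) UNIV * L2_set (\<lambda>i. norm (b $ i)) UNIV"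
    by (rule L2_set_mult_ineq)
  also have "\<dots> = enorm c a * enorm c b"
    by (simp add: L2_set_def enorm_eq_sqrt_sum)
  finally show ?thesis .
qed

lemma Xnorm_nonneg: "0 \<le> Xnorm c R x"
  by (simp add: Xnorm_def)

lemma pos_def_Xnorm_pos:
  assumes "pos_def c R" and "x \<noteq> 0"
  shows "0 < Xnorm c R x"
  using assms unfolding pos_def_def Xnorm_def by auto

lemma pos_def_cip_eq_Xnorm_sq:
  assumes "pos_def c R"
  shows "cip c (R *v x) x = of_real ((Xnorm c R x)\<^sup>2)"
proof (cases "x = 0")
  case True
  then show ?thesis by (simp add: cip_def Xnorm_def)
next
  case False
  then show ?thesis
    using assms unfolding pos_def_def Xnorm_def by auto
qed

lemma pos_def_matrix_inv_left:
  assumes "pos_def c R"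
  shows "matrix_inv R ** R = mat 1"
proof -
  have "inj ((*v) R)"
  proof (rule injI)
    fix x y
    assume "R *v x = R *v y"
    then have "cip c (R *v (x - y)) (x - y) = 0"
      by (simp add: matrix_vector_mult_diff_distrib cip_def conj_zero)
    then show "x = y"
      using assms unfolding pos_def_def by (metis of_real_eq_0_iff less_irrefl right_minus_eq)
  qed
  then have "invertible R"
    using det_nz_iff_inj_gen[of "(*v) R"] by (simp add: invertible_det_nz)
  then show ?thesis
    unfolding matrix_inv_def invertible_def by (metis (mono_tags, lifting) someI_ex)
qed

lemma pos_def_matrix_inv_cancel:
  assumes "pos_def c R"
  shows "matrix_inv R *v (R *v y) = y"
  by (simp add: matrix_vector_mul_assoc pos_def_matrix_inv_left[OF assms])

lemma Xdualnorm_image: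
  assumes "pos_def c R"
  shows "Xdualnorm c R (R *v y) = Xnorm c R y"
  by (simp add: Xdualnorm_def Xnorm_def pos_def_matrix_inv_cancel[OF assms])

lemma setting_sketch_norm_bounds:
  assumes st: "setting c R \<Theta> Y Z \<epsilon>" and "x \<in> Y"
  shows "sqrt (1 - \<epsilon>) * Xnorm c R x \<le> enorm c (\<Theta> *v x)"
    and "enorm c (\<Theta> *v x) \<le> sqrt (1 + \<epsilon>) * Xnorm c R x"
proof -
  have pd: "pos_def c R"
    using st by (simp add: setting_def)
  have "norm (cip c (R *v x) x - cip c (\<Theta> *v x) (\<Theta> *v x)) \<le> \<epsilon> * Xnorm c R x * Xnorm c R x"
    using st \<open>x \<in> Y\<close> by (simp add: setting_def)
  also have "cip c (R *v x) x - cip c (\<Theta> *v x) (\<Theta> *v x)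
      = of_real ((Xnorm c R x)\<^sup>2 - (enorm c (\<Theta> *v x))\<^sup>2)"
    by (simp only: pos_def_cip_eq_Xnorm_sq[OF pd] cip_self enorm_sq of_real_diff)
  finally have "\<bar>(Xnorm c R x)\<^sup>2 - (enorm c (\<Theta> *v x))\<^sup>2\<bar> \<le> \<epsilon> * (Xnorm c R x)\<^sup>2"
    by (simp only: norm_of_real) (simp add: power2_eq_square mult.assoc)
  then have "(1 - \<epsilon>) * (Xnorm c R x)\<^sup>2 \<le> (enorm c (\<Theta> *v x))\<^sup>2"
    and "(enorm c (\<Theta> *v x))\<^sup>2 \<le> (1 + \<epsilon>) * (Xnorm c R x)\<^sup>2"
    by (simp_all add: algebra_simps abs_le_iff)
  then have "sqrt ((1 - \<epsilon>) * (Xnorm c R x)\<^sup>2) \<le> sqrt ((enorm c (\<Theta> *v x))\<^sup>2)"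
    and "sqrt ((enorm c (\<Theta> *v x))\<^sup>2) \<le> sqrt ((1 + \<epsilon>) * (Xnorm c R x)\<^sup>2)"
    by (simp_all only: real_sqrt_le_iff)
  then show "sqrt (1 - \<epsilon>) * Xnorm c R x \<le> enorm c (\<Theta> *v x)"
    and "enorm c (\<Theta> *v x) \<le> sqrt (1 + \<epsilon>) * Xnorm c R x"
    by (simp_all add: real_sqrt_mult Xnorm_nonneg enorm_nonneg)
qed

lemma setting_inner_deviation:
  assumes "setting c R \<Theta> Y Z \<epsilon>" and "x \<in> Y" and "y \<in> Y"
  shows "\<bar>norm (cip c (R *v y) x) - norm (cip c (\<Theta> *v y) (\<Theta> *v x))\<bar>
           \<le> \<epsilon> * Xnorm c R y * Xnorm c R x"
  using assms norm_triangle_ineq3 unfolding setting_def by (meson order_trans)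

lemma setting_sketch_norm_pos:
  assumes st: "setting c R \<Theta> Y Z \<epsilon>" and "x \<in> Y" and "x \<noteq> 0"
  shows "0 < enorm c (\<Theta> *v x)"
proof -
  have "0 < sqrt (1 - \<epsilon>) * Xnorm c R x"
    using st \<open>x \<noteq> 0\<close> by (simp add: setting_def pos_def_Xnorm_pos)
  with setting_sketch_norm_bounds(1)[OF st \<open>x \<in> Y\<close>] show ?thesis
    by linarith
qed

lemma ZdualnormTheta_image:
  assumes "pos_def c R"
  shows "ZdualnormTheta c R \<Theta> Z (R *v y) =
    Sup (insert 0 {norm (cip c (\<Theta> *v y) (\<Theta> *v x)) / enorm c (\<Theta> *v x) | x. x \<in> Z \<and> x \<noteq> 0})"
  unfolding ZdualnormTheta_def pos_def_matrix_inv_cancel[OF assms] ..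

lemma
  assumes st: "setting c R \<Theta> Y Z \<epsilon>" and "y \<in> Y"
  shows ZdualnormTheta_image_nonneg: "0 \<le> ZdualnormTheta c R \<Theta> Z (R *v y)"
    and cip_sketch_le_ZdualnormTheta: "x \<in> Z \<Longrightarrow> x \<noteq> 0 \<Longrightarrow>
      norm (cip c (\<Theta> *v y) (\<Theta> *v x)) \<le> ZdualnormTheta c R \<Theta> Z (R *v y) * enorm c (\<Theta> *v x)"
proof -
  have pos: "0 < enorm c (\<Theta> *v x)" if "x \<in> Z \<and> x \<noteq> 0" for x
    using st that setting_sketch_norm_pos[OF st] by (auto simp: setting_def)
  note bounds = ratio_Sup_nonneg[OF pos cip_cauchy_schwarz] le_ratio_Sup[OF pos cip_cauchy_schwarz]
  have pd: "pos_def c R"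
    using st by (simp add: setting_def)
  show "0 \<le> ZdualnormTheta c R \<Theta> Z (R *v y)"
    unfolding ZdualnormTheta_image[OF pd] by (rule bounds(1))
  show "norm (cip c (\<Theta> *v y) (\<Theta> *v x)) \<le> ZdualnormTheta c R \<Theta> Z (R *v y) * enorm c (\<Theta> *v x)"
    if "x \<in> Z" "x \<noteq> 0" for x
    unfolding ZdualnormTheta_image[OF pd] using that by (intro bounds(2)) auto
qed

text \<open>Boundedness of the quotients defining ||R y||_Z' is obtained through the sketch as well.\<close>

lemma
  assumes st: "setting c R \<Theta> Y Z \<epsilon>" and "y \<in> Y"
  shows Zdualnorm_image_nonneg: "0 \<le> Zdualnorm c R Z (R *v y)"
    and cip_le_Zdualnorm: "x \<in> Z \<Longrightarrow> x \<noteq> 0 \<Longrightarrow>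
      norm (cip c (R *v y) x) \<le> Zdualnorm c R Z (R *v y) * Xnorm c R x"
proof -
  have ZY: "Z \<subseteq> Y" and pd: "pos_def c R"
    using st by (auto simp: setting_def)
  have pos: "0 < Xnorm c R x" if "x \<in> Z \<and> x \<noteq> 0" for x
    using pd that by (simp add: pos_def_Xnorm_pos)
  have bound: "norm (cip c (R *v y) x)
      \<le> (enorm c (\<Theta> *v y) * sqrt (1 + \<epsilon>) + \<epsilon> * Xnorm c R y) * Xnorm c R x"
    if "x \<in> Z \<and> x \<noteq> 0" for x
  proof -
    have xY: "x \<in> Y"
      using that ZY by auto
    have "norm (cip c (R *v y) x)
        \<le> enorm c (\<Theta> *v y) * enorm c (\<Theta> *v x) + \<epsilon> * Xnorm c R y * Xnorm c R x"
      using setting_inner_deviation[OF st xY \<open>y \<in> Y\<close>] cip_cauchy_schwarz[of "\<Theta> *v y" "\<Theta> *v x"]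
      by linarith
    also have "\<dots> \<le> enorm c (\<Theta> *v y) * (sqrt (1 + \<epsilon>) * Xnorm c R x) + \<epsilon> * Xnorm c R y * Xnorm c R x"
      by (intro add_right_mono mult_left_mono setting_sketch_norm_bounds(2)[OF st xY] enorm_nonneg)
    finally show ?thesis
      by (simp add: algebra_simps)
  qed
  note bounds = ratio_Sup_nonneg[OF pos bound] le_ratio_Sup[OF pos bound]
  show "0 \<le> Zdualnorm c R Z (R *v y)"
    unfolding Zdualnorm_def by (rule bounds(1))
  show "norm (cip c (R *v y) x) \<le> Zdualnorm c R Z (R *v y) * Xnorm c R x"
    if "x \<in> Z" "x \<noteq> 0" for x
    unfolding Zdualnorm_def using that by (intro bounds(2)) auto
qed

lemma ZdualnormTheta_image_le:
  assumes st: "setting c R \<Theta> Y Z \<epsilon>" and "y \<in> Y"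
  shows "ZdualnormTheta c R \<Theta> Z (R *v y)
           \<le> (Zdualnorm c R Z (R *v y) + \<epsilon> * Xnorm c R y) / sqrt (1 - \<epsilon>)"
proof -
  define B where "B = Zdualnorm c R Z (R *v y) + \<epsilon> * Xnorm c R y"
  have ZY: "Z \<subseteq> Y" and pd: "pos_def c R" and e: "0 \<le> \<epsilon>" "\<epsilon> < 1"
    using st by (auto simp: setting_def)
  have B: "0 \<le> B"
    unfolding B_def
    by (intro add_nonneg_nonneg mult_nonneg_nonneg Zdualnorm_image_nonneg[OF st \<open>y \<in> Y\<close>] e(1) Xnorm_nonneg)
  have "norm (cip c (\<Theta> *v y) (\<Theta> *v x)) \<le> B / sqrt (1 - \<epsilon>) * enorm c (\<Theta> *v x)"
    if "x \<in> Z" "x \<noteq> 0" for x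
  proof -
    have xY: "x \<in> Y"
      using that ZY by auto
    have "norm (cip c (\<Theta> *v y) (\<Theta> *v x)) \<le> B * Xnorm c R x"
      using setting_inner_deviation[OF st xY \<open>y \<in> Y\<close>] cip_le_Zdualnorm[OF st \<open>y \<in> Y\<close> that]
      by (simp add: B_def algebra_simps abs_le_iff)
    also have "\<dots> \<le> B * (enorm c (\<Theta> *v x) / sqrt (1 - \<epsilon>))"
      using setting_sketch_norm_bounds(1)[OF st xY] e B
      by (intro mult_left_mono) (simp_all add: le_divide_eq mult.commute)
    finally show ?thesis
      by simp
  qed
  then show ?thesis
    unfolding ZdualnormTheta_image[OF pd] B_def[symmetric]
    using B e setting_sketch_norm_pos[OF st] ZY by (intro ratio_Sup_le) auto
qed

lemma Zdualnorm_image_le: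
  assumes st: "setting c R \<Theta> Y Z \<epsilon>" and "y \<in> Y"
  shows "Zdualnorm c R Z (R *v y)
           \<le> sqrt (1 + \<epsilon>) * ZdualnormTheta c R \<Theta> Z (R *v y) + \<epsilon> * Xnorm c R y"
proof -
  define T where "T = ZdualnormTheta c R \<Theta> Z (R *v y)"
  have ZY: "Z \<subseteq> Y" and pd: "pos_def c R" and e: "0 \<le> \<epsilon>"
    using st by (auto simp: setting_def)
  have T: "0 \<le> T"
    using ZdualnormTheta_image_nonneg[OF st \<open>y \<in> Y\<close>] by (simp add: T_def)
  have B: "0 \<le> sqrt (1 + \<epsilon>) * T + \<epsilon> * Xnorm c R y"
    using e by (intro add_nonneg_nonneg mult_nonneg_nonneg T Xnorm_nonneg) auto
  have "norm (cip c (R *v y) x) \<le> (sqrt (1 + \<epsilon>) * T + \<epsilon> * Xnorm c R y) * Xnorm c R x"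
    if "x \<in> Z" "x \<noteq> 0" for x
  proof -
    have xY: "x \<in> Y"
      using that ZY by auto
    have "norm (cip c (\<Theta> *v y) (\<Theta> *v x)) \<le> T * enorm c (\<Theta> *v x)"
      using cip_sketch_le_ZdualnormTheta[OF st \<open>y \<in> Y\<close> that] by (simp add: T_def)
    also have "\<dots> \<le> T * (sqrt (1 + \<epsilon>) * Xnorm c R x)"
      using setting_sketch_norm_bounds(2)[OF st xY] T by (rule mult_left_mono)
    finally show ?thesis
      using setting_inner_deviation[OF st xY \<open>y \<in> Y\<close>] by (simp add: algebra_simps abs_le_iff)
  qed
  then show ?thesis
    unfolding Zdualnorm_def T_def[symmetric]
    using B pd by (intro ratio_Sup_le) (auto simp: pos_def_Xnorm_pos)
qed

lemma setting_dual_norm_bounds: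
  assumes st: "setting c R \<Theta> Y Z \<epsilon>" and "y' \<in> (\<lambda>y. R *v y) ` Y"
  shows "(Zdualnorm c R Z y' - \<epsilon> * Xdualnorm c R y') / sqrt (1 + \<epsilon>) \<le> ZdualnormTheta c R \<Theta> Z y'"
    and "ZdualnormTheta c R \<Theta> Z y' \<le> (Zdualnorm c R Z y' + \<epsilon> * Xdualnorm c R y') / sqrt (1 - \<epsilon>)"
proof -
  obtain y where "y \<in> Y" and y': "y' = R *v y"
    using assms(2) by blast
  have "0 < sqrt (1 + \<epsilon>)"
    using st by (simp add: setting_def)
  moreover have "Xdualnorm c R y' = Xnorm c R y"
    using st by (simp add: y' setting_def Xdualnorm_image)
  ultimately show "(Zdualnorm c R Z y' - \<epsilon> * Xdualnorm c R y') / sqrt (1 + \<epsilon>) \<le> ZdualnormTheta c R \<Theta> Z y'"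
    and "ZdualnormTheta c R \<Theta> Z y' \<le> (Zdualnorm c R Z y' + \<epsilon> * Xdualnorm c R y') / sqrt (1 - \<epsilon>)"
    using Zdualnorm_image_le[OF st \<open>y \<in> Y\<close>] ZdualnormTheta_image_le[OF st \<open>y \<in> Y\<close>]
    by (simp_all add: y' divide_le_eq mult.commute)
qed

end

interpretation real_conjugation: conjugation "id :: real \<Rightarrow> real"
  by unfold_locales (simp_all add: power2_eq_square)

interpretation complex_conjugation: conjugation cnj
  by unfold_locales (simp_all add: mult.commute flip: complex_norm_square)

theorem proposition3p4:
  shows
  "(\<forall>(R::real^'n^'n) (\<Theta>::real^'n^'m) Y Z \<epsilon> y'.
      setting id R \<Theta> Y Z \<epsilon> \<and> y' \<in> (\<lambda>y. R *v y) ` Y \<longrightarrow>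
        (Zdualnorm id R Z y' - \<epsilon> * Xdualnorm id R y') / sqrt (1 + \<epsilon>)
          \<le> ZdualnormTheta id R \<Theta> Z y' \<and>
        ZdualnormTheta id R \<Theta> Z y'
          \<le> (Zdualnorm id R Z y' + \<epsilon> * Xdualnorm id R y') / sqrt (1 - \<epsilon>))
   \<and>
   (\<forall>(R::complex^'n^'n) (\<Theta>::complex^'n^'m) Y Z \<epsilon> y'.
      setting cnj R \<Theta> Y Z \<epsilon> \<and> y' \<in> (\<lambda>y. R *v y) ` Y \<longrightarrow>
        (Zdualnorm cnj R Z y' - \<epsilon> * Xdualnorm cnj R y') / sqrt (1 + \<epsilon>)
          \<le> ZdualnormTheta cnj R \<Theta> Z y' \<and>
        ZdualnormTheta cnj R \<Theta> Z y'
          \<le> (Zdualnorm cnj R Z y' + \<epsilon> * Xdualnorm cnj R y') / sqrt (1 - \<epsilon>))"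
  by (intro conjI allI impI; elim conjE)
    (simp_all add: real_conjugation.setting_dual_norm_bounds complex_conjugation.setting_dual_norm_bounds)

end
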